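(* Let $\Gamma$ be a locally finite weighted graph and let $X$ be a finite subset of its vertex set. Then the following are equivalent: (1) $\Delta(\mathbb{R}^\Gamma_{\Gamma\setminus X})=\mathbb{R}^\Gamma$; (2) there is no non-zero finitely supported function on $\Gamma$ that is harmonic on $\Gamma\setminus X$.
   Context: Weighted graph: undirected, no loops or multiple edges, weights $\omega_{xy}=\omega_{yx}>0$, $\deg x=\sum_{y\sim x}\omega_{xy}$. Laplacian: $\Delta f(x)=f(x)-\frac{1}{\deg x}\sum_{y\sim x}\omega_{xy}f(y)$ for $f\in\mathbb{R}^\Gamma$. For a set $Y$ of vertices, $\mathbb{R}^\Gamma_Y$ denotes the space of functions $\Gamma\to\mathbb{R}$ supported on $Y$. A function is harmonic on $A$ if $\Delta f(x)=0$ for all $x\in A$. *)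

theory Defs
  imports Main "HOL.Real"
begin

definition weighted_graph :: "('a \<Rightarrow> 'a \<Rightarrow> real) \<Rightarrow> bool" where
  "weighted_graph w \<longleftrightarrow> (\<forall>x y. w x y = w y x) \<and> (\<forall>x y. 0 \<le> w x y) \<and> (\<forall>x. w x x = 0)"

definition neighbours :: "('a \<Rightarrow> 'a \<Rightarrow> real) \<Rightarrow> 'a \<Rightarrow> 'a set" where
  "neighbours w x = {y. 0 < w x y}"

definition locally_finite :: "('a \<Rightarrow> 'a \<Rightarrow> real) \<Rightarrow> bool" where
  "locally_finite w \<longleftrightarrow> (\<forall>x. finite (neighbours w x))"

definition deg :: "('a \<Rightarrow> 'a \<Rightarrow> real) \<Rightarrow> 'a \<Rightarrow> real" where
  "deg w x = (\<Sum>y\<in>neighbours w x. w x y)"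

definition laplacian :: "('a \<Rightarrow> 'a \<Rightarrow> real) \<Rightarrow> ('a \<Rightarrow> real) \<Rightarrow> 'a \<Rightarrow> real" where
  "laplacian w f x = f x - (\<Sum>y\<in>neighbours w x. w x y * f y) / deg w x"

definition supported_on :: "'a set \<Rightarrow> ('a \<Rightarrow> real) set" where
  "supported_on Y = {f. \<forall>x. x \<notin> Y \<longrightarrow> f x = 0}"

definition harmonic_on :: "('a \<Rightarrow> 'a \<Rightarrow> real) \<Rightarrow> ('a \<Rightarrow> real) \<Rightarrow> 'a set \<Rightarrow> bool" where
  "harmonic_on w f A \<longleftrightarrow> (\<forall>x\<in>A. laplacian w f x = 0)"

definition finitely_supported :: "('a \<Rightarrow> real) \<Rightarrow> bool" where
  "finitely_supported f \<longleftrightarrow> finite {x. f x \<noteq> 0}"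

end

theory Submission
  imports Defs Complex_Main "HOL-Library.Function_Algebras"
begin

text \<open>Write \<open>\<mu> x\<close> for the degree of \<open>x\<close> (or \<open>1\<close> at an isolated vertex). Then \<open>\<mu> \<Delta>\<close> is
  symmetric for the pairing \<open>\<langle>f, g\<rangle> = \<Sum>\<^sub>y f y * g y\<close> whenever one side is finitely supported.

  If \<open>\<Delta> f = \<delta>\<^sub>x\<close> with \<open>f\<close> vanishing on \<open>X\<close> and \<open>g\<close> is finitely supported and harmonic off \<open>X\<close>,
  then \<open>\<mu> x * g x = \<langle>\<mu> \<Delta> f, g\<rangle> = \<langle>f, \<mu> \<Delta> g\<rangle> = 0\<close>, so \<open>g = 0\<close>.

  Conversely, the absence of such \<open>g\<close> says exactly that the finitely supported functions
  \<open>t\<^sub>x = \<mu> \<Delta> \<delta>\<^sub>x\<close>, restricted to the complement of \<open>X\<close>, are linearly independent. Given \<open>h\<close>, extend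
  \<open>t\<^sub>x \<mapsto> \<mu> x * h x\<close> to a linear functional \<open>\<phi>\<close> on all functions and put \<open>f y = \<phi> \<delta>\<^sub>y\<close> off \<open>X\<close>;
  symmetry gives \<open>\<mu> x * \<Delta> f x = \<phi> t\<^sub>x = \<mu> x * h x\<close>.\<close>

text \<open>Pointwise scaling turns \<open>'a \<Rightarrow> real\<close> into a real vector space; the library provides
  no \<open>real_vector\<close> instance for function types.\<close>

definition scale_fun :: "real \<Rightarrow> ('a \<Rightarrow> real) \<Rightarrow> 'a \<Rightarrow> real" where
  "scale_fun c f = (\<lambda>x. c * f x)"

lemma vector_space_pair_scale_fun:
  "vector_space_pair (scale_fun :: real \<Rightarrow> ('a \<Rightarrow> real) \<Rightarrow> 'a \<Rightarrow> real) ((*) :: real \<Rightarrow> real \<Rightarrow> real)"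
  by unfold_locales (auto simp: scale_fun_def fun_eq_iff algebra_simps)

lemma sum_fun_apply: "(\<Sum>i\<in>E. F i) x = (\<Sum>i\<in>E. F i x)"
  for F :: "'b \<Rightarrow> 'a \<Rightarrow> real"
  by (induct E rule: infinite_finite_induct) auto

lemma linear_functional_extend:
  fixes B :: "('a \<Rightarrow> real) set" and f :: "('a \<Rightarrow> real) \<Rightarrow> real"
  assumes "\<And>S u. finite S \<Longrightarrow> S \<subseteq> B \<Longrightarrow> (\<Sum>v\<in>S. scale_fun (u v) v) = 0 \<Longrightarrow> \<forall>v\<in>S. u v = 0"
  shows "\<exists>\<phi>. Vector_Spaces.linear scale_fun (*) \<phi> \<and> (\<forall>v\<in>B. \<phi> v = f v)"
proof -
  interpret vector_space_pair "scale_fun :: real \<Rightarrow> ('a \<Rightarrow> real) \<Rightarrow> 'a \<Rightarrow> real" "(*)"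
    by (rule vector_space_pair_scale_fun)
  have "vs1.independent B"
    unfolding vs1.independent_explicit_finite_subsets using assms by blast
  then show ?thesis by (rule linear_independent_extend)
qed

lemma linear_functional_sum:
  assumes "Vector_Spaces.linear scale_fun (*) \<phi>"
  shows "\<phi> (\<Sum>i\<in>E. scale_fun (c i) (v i :: 'a \<Rightarrow> real)) = (\<Sum>i\<in>E. c i * \<phi> (v i))"
proof -
  interpret Vector_Spaces.linear scale_fun "(*) :: real \<Rightarrow> real \<Rightarrow> real" \<phi> by (rule assms)
  show ?thesis by (simp add: sum scale)
qed

definition delta :: "'a \<Rightarrow> 'a \<Rightarrow> real" where
  "delta x = (\<lambda>z. if z = x then 1 else 0)"

lemma sum_mult_delta: "finite F \<Longrightarrow> (\<Sum>y\<in>F. c y * delta y z) = (if z \<in> F then c z else 0)"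
  by (simp add: delta_def if_distrib sum.delta' cong: if_cong)

lemma sum_mult_delta': "finite F \<Longrightarrow> x \<in> F \<Longrightarrow> (\<Sum>y\<in>F. c y * delta x y) = c x"
  by (simp add: delta_def if_distrib sum.delta cong: if_cong)

definition mass :: "('a \<Rightarrow> 'a \<Rightarrow> real) \<Rightarrow> 'a \<Rightarrow> real" where
  "mass w x = (if deg w x > 0 then deg w x else 1)"

lemma mass_pos: "mass w x > 0"
  by (simp add: mass_def)

lemma neighbours_empty_if_deg_nonpos:
  assumes "locally_finite w" "\<not> deg w x > 0"
  shows "neighbours w x = {}"
proof (rule ccontr)
  assume "neighbours w x \<noteq> {}"
  moreover have "finite (neighbours w x)" using assms(1) by (simp add: locally_finite_def)
  ultimately have "deg w x > 0" unfolding deg_def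
    by (intro sum_pos) (auto simp: neighbours_def)
  with assms(2) show False by simp
qed

lemma mass_mult_laplacian:
  assumes "locally_finite w"
  shows "mass w y * laplacian w f y = mass w y * f y - (\<Sum>z\<in>neighbours w y. w y z * f z)"
proof (cases "deg w y > 0")
  case True
  then show ?thesis by (simp add: mass_def laplacian_def right_diff_distrib)
next
  case False
  then show ?thesis
    using neighbours_empty_if_deg_nonpos[OF assms False] by (simp add: mass_def laplacian_def)
qed

lemma sum_neighbours_eq_sum_superset:
  assumes "weighted_graph w" "locally_finite w" "finite F"
    and "\<And>z. z \<in> neighbours w y \<Longrightarrow> u z \<noteq> 0 \<Longrightarrow> z \<in> F"
  shows "(\<Sum>z\<in>neighbours w y. w y z * u z) = (\<Sum>z\<in>F. w y z * u z)"
proof -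
  have "finite (neighbours w y)" using assms(2) by (simp add: locally_finite_def)
  then have "(\<Sum>z\<in>neighbours w y. w y z * u z) = (\<Sum>z\<in>neighbours w y \<inter> F. w y z * u z)"
    by (rule sum.mono_neutral_right) (use assms(4) in auto)
  also have "\<dots> = (\<Sum>z\<in>F. w y z * u z)"
  proof (rule sum.mono_neutral_left)
    show "\<forall>z\<in>F - neighbours w y \<inter> F. w y z * u z = 0"
      using assms(1) unfolding weighted_graph_def neighbours_def
      by (metis Diff_iff IntI mem_Collect_eq mult_eq_0_iff order_le_less)
  qed (use assms(3) in auto)
  finally show ?thesis .
qed

lemma mass_laplacian_symmetric:
  assumes wg: "weighted_graph w" and lf: "locally_finite w" and F: "finite F"
    and g: "\<And>y. g y \<noteq> 0 \<Longrightarrow> y \<in> F \<and> neighbours w y \<subseteq> F"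
  shows "(\<Sum>y\<in>F. mass w y * laplacian w f y * g y) = (\<Sum>y\<in>F. f y * (mass w y * laplacian w g y))"
proof -
  have laplacian_on_F: "mass w y * laplacian w u y = mass w y * u y - (\<Sum>z\<in>F. w y z * u z)"
    if "\<And>z. z \<in> neighbours w y \<Longrightarrow> u z \<noteq> 0 \<Longrightarrow> z \<in> F" for u y
    using sum_neighbours_eq_sum_superset[OF wg lf F that] by (simp add: mass_mult_laplacian[OF lf])
  have swap: "(\<Sum>y\<in>F. \<Sum>z\<in>F. w y z * f z * g y) = (\<Sum>y\<in>F. \<Sum>z\<in>F. w y z * g z * f y)"
    using wg unfolding weighted_graph_def by (subst sum.swap) (simp add: mult_ac)
  have "(\<Sum>y\<in>F. mass w y * laplacian w f y * g y)
      = (\<Sum>y\<in>F. (mass w y * f y - (\<Sum>z\<in>F. w y z * f z)) * g y)"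
  proof (rule sum.cong[OF refl])
    fix y
    show "mass w y * laplacian w f y * g y = (mass w y * f y - (\<Sum>z\<in>F. w y z * f z)) * g y"
      using g[of y] laplacian_on_F[of y f] by (cases "g y = 0") auto
  qed
  also have "\<dots> = (\<Sum>y\<in>F. mass w y * f y * g y) - (\<Sum>y\<in>F. \<Sum>z\<in>F. w y z * f z * g y)"
    by (simp add: left_diff_distrib sum_subtractf sum_distrib_right)
  also have "\<dots> = (\<Sum>y\<in>F. f y * (mass w y * g y - (\<Sum>z\<in>F. w y z * g z)))"
    unfolding swap right_diff_distrib sum_subtractf sum_distrib_left by (simp only: mult_ac)
  also have "\<dots> = (\<Sum>y\<in>F. f y * (mass w y * laplacian w g y))"
    using g by (intro sum.cong refl) (metis laplacian_on_F subsetD)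
  finally show ?thesis .
qed

lemma laplacian_sum:
  "laplacian w (\<lambda>z. \<Sum>i\<in>E. c i * F i z) y = (\<Sum>i\<in>E. c i * laplacian w (F i) y)"
proof -
  have distrib: "(\<Sum>i\<in>E. c i * u i) - (\<Sum>i\<in>E. c i * v i) / d = (\<Sum>i\<in>E. c i * (u i - v i / d))"
    for u v :: "_ \<Rightarrow> real" and d
    by (simp add: sum_subtractf right_diff_distrib sum_divide_distrib mult_ac)
  have "(\<Sum>z\<in>neighbours w y. w y z * (\<Sum>i\<in>E. c i * F i z))
      = (\<Sum>i\<in>E. c i * (\<Sum>z\<in>neighbours w y. w y z * F i z))"
    by (simp add: sum_distrib_left mult_ac) (rule sum.swap)
  then show ?thesis
    unfolding laplacian_def by (simp only: distrib)
qed

lemma no_harmonic_if_laplacian_surj: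
  assumes wg: "weighted_graph w" and lf: "locally_finite w"
    and surj: "laplacian w ` supported_on (UNIV - X) = UNIV"
    and fs: "finitely_supported g" and hg: "harmonic_on w g (UNIV - X)"
  shows "g = (\<lambda>_. 0)"
proof (rule ccontr)
  assume "g \<noteq> (\<lambda>_. 0)"
  then obtain x where gx: "g x \<noteq> 0" by auto
  obtain f where fS: "f \<in> supported_on (UNIV - X)" and lfx: "laplacian w f = delta x"
    by (metis surj UNIV_I imageE)
  define S where "S = {y. g y \<noteq> 0}"
  define F where "F = S \<union> \<Union>(neighbours w ` S)"
  have "finite F"
    using fs lf by (simp add: F_def S_def finitely_supported_def locally_finite_def)
  moreover have "x \<in> F" using gx by (simp add: F_def S_def)
  ultimately have "mass w x * g x = (\<Sum>y\<in>F. (mass w y * g y) * delta x y)"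
    by (simp add: sum_mult_delta')
  also have "\<dots> = (\<Sum>y\<in>F. mass w y * laplacian w f y * g y)"
    by (simp add: lfx mult_ac)
  also have "\<dots> = (\<Sum>y\<in>F. f y * (mass w y * laplacian w g y))"
    using \<open>finite F\<close> by (intro mass_laplacian_symmetric[OF wg lf]) (auto simp: F_def S_def)
  also have "\<dots> = 0"
    using fS hg by (intro sum.neutral) (auto simp: supported_on_def harmonic_on_def)
  finally show False using gx mass_pos[of w x] by simp
qed

definition restricted_laplacian_delta :: "('a \<Rightarrow> 'a \<Rightarrow> real) \<Rightarrow> 'a set \<Rightarrow> 'a \<Rightarrow> 'a \<Rightarrow> real" where
  "restricted_laplacian_delta w X x = (\<lambda>y. if y \<in> X then 0 else mass w y * laplacian w (delta x) y)"

lemma restricted_laplacian_delta_independent: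
  assumes no_harmonic: "\<And>g. finitely_supported g \<Longrightarrow> harmonic_on w g (UNIV - X) \<Longrightarrow> g = (\<lambda>_. 0)"
    and E: "finite E" and comb: "\<And>y. (\<Sum>i\<in>E. c i * restricted_laplacian_delta w X i y) = 0"
  shows "\<forall>i\<in>E. c i = 0"
proof -
  define g where "g = (\<lambda>z. \<Sum>i\<in>E. c i * delta i z)"
  have g_eq: "g z = (if z \<in> E then c z else 0)" for z
    unfolding g_def by (rule sum_mult_delta[OF E])
  have "finitely_supported g"
    unfolding finitely_supported_def by (rule finite_subset[OF _ E]) (auto simp: g_eq)
  moreover have "harmonic_on w g (UNIV - X)"
    unfolding harmonic_on_def
  proof
    fix y assume "y \<in> UNIV - X"
    then have "mass w y * laplacian w g y = (\<Sum>i\<in>E. c i * restricted_laplacian_delta w X i y)"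
      by (simp add: g_def laplacian_sum restricted_laplacian_delta_def sum_distrib_left mult_ac)
    then show "laplacian w g y = 0" using comb[of y] mass_pos[of w y] by simp
  qed
  ultimately have "g = (\<lambda>_. 0)" by (rule no_harmonic)
  then show ?thesis by (metis g_eq)
qed

lemma inj_restricted_laplacian_delta:
  assumes "\<And>g. finitely_supported g \<Longrightarrow> harmonic_on w g (UNIV - X) \<Longrightarrow> g = (\<lambda>_. 0)"
  shows "inj (restricted_laplacian_delta w X)"
proof (rule injI, rule ccontr)
  fix a b
  assume eq: "restricted_laplacian_delta w X a = restricted_laplacian_delta w X b" and "a \<noteq> b"
  define c :: "'a \<Rightarrow> real" where "c i = (if i = a then 1 else -1)" for i
  have "\<forall>i\<in>{a, b}. c i = 0"
    using \<open>a \<noteq> b\<close> eq by (intro restricted_laplacian_delta_independent[OF assms]) (auto simp: c_def)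
  then show False by (simp add: c_def)
qed

lemma restricted_laplacian_delta_expansion:
  fixes X :: "'a set" and x :: 'a
  assumes wg: "weighted_graph w" and lf: "locally_finite w"
  defines "t \<equiv> restricted_laplacian_delta w X x" and "F \<equiv> insert x (neighbours w x)"
  shows "t = (\<Sum>y\<in>F. scale_fun (t y) (delta y))"
proof -
  have fin: "finite (neighbours w z)" for z using lf by (simp add: locally_finite_def)
  have "t z = 0" if "z \<notin> F" for z
  proof -
    have "x \<notin> neighbours w z"
      using that wg by (auto simp: F_def neighbours_def weighted_graph_def)
    then have "(\<Sum>v\<in>neighbours w z. w z v * delta x v) = 0"
      by (simp add: delta_def if_distrib sum.delta' fin cong: if_cong)
    moreover have "z \<noteq> x" using that by (simp add: F_def)
    ultimately show ?thesis
      by (simp add: t_def restricted_laplacian_delta_def mass_mult_laplacian[OF lf] delta_def)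
  qed
  moreover have "finite F" using fin by (simp add: F_def)
  ultimately show ?thesis
    by (auto simp: fun_eq_iff sum_fun_apply scale_fun_def sum_mult_delta)
qed

lemma mass_laplacian_dual:
  assumes wg: "weighted_graph w" and lf: "locally_finite w"
    and lin: "Vector_Spaces.linear scale_fun (*) \<phi>"
  shows "mass w x * laplacian w (\<lambda>y. if y \<in> X then 0 else \<phi> (delta y)) x
       = \<phi> (restricted_laplacian_delta w X x)"
    (is "_ = \<phi> ?t")
proof -
  define F where "F = insert x (neighbours w x)"
  define f where "f = (\<lambda>y. if y \<in> X then 0 else \<phi> (delta y))"
  have "finite F" using lf by (simp add: F_def locally_finite_def)
  have "mass w x * laplacian w f x = (\<Sum>y\<in>F. mass w y * laplacian w f y * delta x y)"
    using \<open>finite F\<close> by (simp add: sum_mult_delta' F_def)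
  also have "\<dots> = (\<Sum>y\<in>F. f y * (mass w y * laplacian w (delta x) y))"
    using \<open>finite F\<close> by (intro mass_laplacian_symmetric[OF wg lf])
      (auto simp: delta_def F_def split: if_splits)
  also have "\<dots> = (\<Sum>y\<in>F. ?t y * \<phi> (delta y))"
    by (rule sum.cong) (auto simp: f_def restricted_laplacian_delta_def)
  also have "\<dots> = \<phi> ?t"
    by (subst (2) restricted_laplacian_delta_expansion[OF wg lf])
      (simp add: F_def linear_functional_sum[OF lin])
  finally show ?thesis by (simp add: f_def)
qed

lemma laplacian_surj_if_no_harmonic:
  assumes wg: "weighted_graph w" and lf: "locally_finite w"
    and no_harmonic: "\<And>g. finitely_supported g \<Longrightarrow> harmonic_on w g (UNIV - X) \<Longrightarrow> g = (\<lambda>_. 0)"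
  shows "laplacian w ` supported_on (UNIV - X) = UNIV"
proof (intro set_eqI iffI)
  fix h :: "'a \<Rightarrow> real"
  let ?t = "restricted_laplacian_delta w X"
  have inj: "inj ?t" by (rule inj_restricted_laplacian_delta[OF no_harmonic])
  obtain \<phi> where lin: "Vector_Spaces.linear scale_fun (*) \<phi>"
    and \<phi>_t: "\<forall>v\<in>range ?t. \<phi> v = mass w (inv ?t v) * h (inv ?t v)"
  proof (atomize_elim, rule linear_functional_extend)
    fix S u
    assume S: "finite S" "S \<subseteq> range ?t" and zero: "(\<Sum>v\<in>S. scale_fun (u v) v) = 0"
    define E where "E = ?t -` S"
    have S_eq: "S = ?t ` E" unfolding E_def using S(2) by blast
    have "finite E" unfolding E_def using S(1) inj by (simp add: finite_vimageI)
    moreover have "(\<Sum>i\<in>E. u (?t i) * ?t i y) = 0" for y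
      using zero inj unfolding S_eq
      by (simp add: sum.reindex inj_on_subset[OF inj] fun_eq_iff sum_fun_apply scale_fun_def)
    ultimately have "\<forall>i\<in>E. u (?t i) = 0"
      using restricted_laplacian_delta_independent[OF no_harmonic, where c = "\<lambda>i. u (?t i)"]
      by simp
    then show "\<forall>v\<in>S. u v = 0" unfolding S_eq by blast
  qed
  define f where "f = (\<lambda>y. if y \<in> X then 0 else \<phi> (delta y))"
  have "laplacian w f x = h x" for x
    using mass_laplacian_dual[OF wg lf lin, where X = X and x = x] \<phi>_t inj mass_pos[of w x]
    by (simp add: f_def)
  then have "laplacian w f = h" ..
  moreover have "f \<in> supported_on (UNIV - X)" by (simp add: supported_on_def f_def)
  ultimately show "h \<in> laplacian w ` supported_on (UNIV - X)" by blast
qed simp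

theorem lemma5p2:
  fixes w :: "'a \<Rightarrow> 'a \<Rightarrow> real" and X :: "'a set"
  assumes "weighted_graph w" and "locally_finite w" and "finite X"
  shows "(laplacian w ` supported_on (UNIV - X) = UNIV) \<longleftrightarrow>
         \<not> (\<exists>f. f \<noteq> (\<lambda>_. 0) \<and> finitely_supported f \<and> harmonic_on w f (UNIV - X))"
  using no_harmonic_if_laplacian_surj[OF assms(1,2)] laplacian_surj_if_no_harmonic[OF assms(1,2)]
  by blast

end
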